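(* Equip $S^2\subset\mathbb{R}^3$ with the topological quandle operation $x*y=2(x\cdot y)y-x$ and $\mathbb{RP}^2$ with the induced topological quandle operation $[x]*[y]=[2(x\cdot y)y-x]$. Let $\mathbb{Z}_2$ carry the discrete topology and trivial quandle structure ($T=1$). Then $H^2_Q(\mathbb{RP}^2,\mathbb{Z}_2)\neq0$, while $H^2_C(\mathbb{RP}^2,\mathbb{Z}_2)=0$.
   Context: For a quandle $X$ and abelian group $A$ (with $T=1$): $H^2_Q(X,A)$ is the (discrete) quandle cohomology, i.e. the group of all maps $\phi:X\times X\to A$ with $\phi(x,x)=0$ and $\phi(x_1,x_2)+\phi(x_1*x_2,x_3)=\phi(x_1,x_3)+\phi(x_1*x_3,x_2*x_3)$, modulo the maps $(x,y)\mapsto f(x)-f(x*y)$ for arbitrary $f:X\to A$. $H^2_C(X,A)$ is defined the same way but with all maps $\phi$ and $f$ required to be continuous ($X\times X$ with product topology). *)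

theory Defs
  imports "HOL-Analysis.Analysis" "HOL-Library.Z2"
begin

definition S2 :: "(real^3) set" where
  "S2 = sphere 0 1"

definition s2_op :: "real^3 \<Rightarrow> real^3 \<Rightarrow> real^3" where
  "s2_op x y = (2 * (x \<bullet> y)) *\<^sub>R y - x"

definition rp2_class :: "real^3 \<Rightarrow> (real^3) set" where
  "rp2_class x = {x, -x}"

definition RP2 :: "(real^3) set set" where
  "RP2 = rp2_class ` S2"

definition rp2_op :: "(real^3) set \<Rightarrow> (real^3) set \<Rightarrow> (real^3) set" where
  "rp2_op A B = rp2_class (s2_op (SOME x. x \<in> A) (SOME y. y \<in> B))"

definition quotient_topology :: "'a topology \<Rightarrow> ('a \<Rightarrow> 'b) \<Rightarrow> 'b set \<Rightarrow> 'b topology" where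
  "quotient_topology X f Y = topology (\<lambda>U. U \<subseteq> Y \<and> openin X {x \<in> topspace X. f x \<in> U})"

lemma istopology_quotient:
  "istopology (\<lambda>U. U \<subseteq> Y \<and> openin X {x \<in> topspace X. f x \<in> U})"
  unfolding istopology_def
proof (rule conjI; intro allI impI)
  fix S T
  assume a: "S \<subseteq> Y \<and> openin X {x \<in> topspace X. f x \<in> S}"
    and b: "T \<subseteq> Y \<and> openin X {x \<in> topspace X. f x \<in> T}"
  have e: "{x \<in> topspace X. f x \<in> S \<inter> T} = {x \<in> topspace X. f x \<in> S} \<inter> {x \<in> topspace X. f x \<in> T}"
    by auto
  show "S \<inter> T \<subseteq> Y \<and> openin X {x \<in> topspace X. f x \<in> S \<inter> T}"
    using a b by (simp only: e) (auto intro: openin_Int)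
next
  fix K
  assume a: "\<forall>U\<in>K. U \<subseteq> Y \<and> openin X {x \<in> topspace X. f x \<in> U}"
  have e: "{x \<in> topspace X. f x \<in> \<Union>K} = \<Union>((\<lambda>U. {x \<in> topspace X. f x \<in> U}) ` K)"
    by auto
  show "\<Union>K \<subseteq> Y \<and> openin X {x \<in> topspace X. f x \<in> \<Union>K}"
    using a by (simp only: e) (auto intro!: openin_Union)
qed

definition RP2_top :: "(real^3) set topology" where
  "RP2_top = quotient_topology (top_of_set S2) rp2_class RP2"

text \<open>Quandle 2-cocycles and 2-coboundaries (trivial action T = 1) on a carrier X with operation op.\<close>
definition quandle_2cocycle ::
  "'a set \<Rightarrow> ('a \<Rightarrow> 'a \<Rightarrow> 'a) \<Rightarrow> ('a \<Rightarrow> 'a \<Rightarrow> 'b::ab_group_add) \<Rightarrow> bool" where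
  "quandle_2cocycle X op \<phi> \<longleftrightarrow>
     (\<forall>x\<in>X. \<phi> x x = 0) \<and>
     (\<forall>x1\<in>X. \<forall>x2\<in>X. \<forall>x3\<in>X.
        \<phi> x1 x2 + \<phi> (op x1 x2) x3 = \<phi> x1 x3 + \<phi> (op x1 x3) (op x2 x3))"

definition quandle_2coboundary_of ::
  "'a set \<Rightarrow> ('a \<Rightarrow> 'a \<Rightarrow> 'a) \<Rightarrow> ('a \<Rightarrow> 'b::ab_group_add) \<Rightarrow> ('a \<Rightarrow> 'a \<Rightarrow> 'b) \<Rightarrow> bool" where
  "quandle_2coboundary_of X op f \<phi> \<longleftrightarrow> (\<forall>x\<in>X. \<forall>y\<in>X. \<phi> x y = f x - f (op x y))"

definition H2Q_nonzero :: "'a set \<Rightarrow> ('a \<Rightarrow> 'a \<Rightarrow> 'a) \<Rightarrow> 'b::ab_group_add itself \<Rightarrow> bool" where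
  "H2Q_nonzero X op _ \<longleftrightarrow>
     (\<exists>\<phi> :: 'a \<Rightarrow> 'a \<Rightarrow> 'b. quandle_2cocycle X op \<phi> \<and> \<not> (\<exists>f. quandle_2coboundary_of X op f \<phi>))"

definition H2C_zero :: "'a topology \<Rightarrow> 'a set \<Rightarrow> ('a \<Rightarrow> 'a \<Rightarrow> 'a) \<Rightarrow> 'b::ab_group_add itself \<Rightarrow> bool" where
  "H2C_zero T X op _ \<longleftrightarrow>
     (\<forall>\<phi> :: 'a \<Rightarrow> 'a \<Rightarrow> 'b.
        quandle_2cocycle X op \<phi> \<and>
        continuous_map (prod_topology T T) (discrete_topology UNIV) (\<lambda>(x, y). \<phi> x y)
        \<longrightarrow> (\<exists>f. continuous_map T (discrete_topology UNIV) f \<and> quandle_2coboundary_of X op f \<phi>))"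

end

theory Submission
  imports Defs
begin

text \<open>
  Continuous 2-cocycles into a discrete group are locally constant, hence constant on the connected
  space RP2 \<times> RP2; since they vanish on the diagonal, they vanish identically.

  The nontrivial discrete class is the obstruction to lifting RP2 back to S2 as a quandle: choose a
  representative \<open>r A \<in> S2\<close> of every class and let \<open>\<phi> A B \<in> Z2\<close> record the sign in
  \<open>r A * r B = \<plusminus>r (A * B)\<close>. Self-distributivity on S2 makes \<open>\<phi>\<close> a cocycle. For the classes
  X, Y of two orthogonal vectors, \<open>X * Y = X\<close> although \<open>r X * r Y = -r X\<close>, so \<open>\<phi> X Y \<noteq> 0\<close>,
  which no coboundary \<open>f x - f (x * y)\<close> allows.
\<close>

lemma quandle_2coboundary_of_fixed:
  assumes "quandle_2coboundary_of X op f \<phi>" "x \<in> X" "y \<in> X" "op x y = x"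
  shows "\<phi> x y = 0"
  using assms by (simp add: quandle_2coboundary_of_def)

lemma connected_space_imp_H2C_zero:
  assumes conn: "connected_space T" and top: "topspace T = X"
  shows "H2C_zero T X op TYPE('b::ab_group_add)"
  unfolding H2C_zero_def
proof (intro allI impI)
  fix \<phi> :: "'a \<Rightarrow> 'a \<Rightarrow> 'b"
  assume "quandle_2cocycle X op \<phi> \<and>
    continuous_map (prod_topology T T) (discrete_topology UNIV) (\<lambda>(x, y). \<phi> x y)"
  then have cocycle: "quandle_2cocycle X op \<phi>"
    and cont: "continuous_map (prod_topology T T) (discrete_topology UNIV) (\<lambda>(x, y). \<phi> x y)"
    by auto
  have "connected_space (prod_topology T T)"
    using conn by (simp add: connected_space_prod_topology)
  then have "connectedin (discrete_topology UNIV) ((\<lambda>(x, y). \<phi> x y) ` (X \<times> X))"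
    using connectedin_continuous_map_image[OF cont] connectedin_topspace top by force
  then obtain c where const: "\<And>x y. x \<in> X \<Longrightarrow> y \<in> X \<Longrightarrow> \<phi> x y = c"
    by (force simp: connectedin_discrete_topology)
  have "\<phi> x y = 0" if "x \<in> X" "y \<in> X" for x y
    using const[OF that] const[of x x] cocycle that by (simp add: quandle_2cocycle_def)
  then show "\<exists>f. continuous_map T (discrete_topology UNIV) f \<and> quandle_2coboundary_of X op f \<phi>"
    by (intro exI[of _ "\<lambda>_. 0"]) (simp add: quandle_2coboundary_of_def)
qed

lemma openin_RP2_top:
  "openin RP2_top U \<longleftrightarrow> U \<subseteq> RP2 \<and> openin (top_of_set S2) {x \<in> S2. rp2_class x \<in> U}"
  unfolding RP2_top_def quotient_topology_def
  by (subst topology_inverse'[OF istopology_quotient]) simp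

lemma topspace_RP2_top: "topspace RP2_top = RP2"
proof -
  have "{x \<in> S2. rp2_class x \<in> RP2} = topspace (top_of_set S2)"
    by (auto simp: RP2_def)
  then have "openin RP2_top RP2"
    by (simp add: openin_RP2_top)
  then have "RP2 \<subseteq> topspace RP2_top" by (rule openin_subset)
  moreover have "topspace RP2_top \<subseteq> RP2"
    using openin_RP2_top openin_topspace by blast
  ultimately show ?thesis by blast
qed

lemma continuous_map_rp2_class: "continuous_map (top_of_set S2) RP2_top rp2_class"
  unfolding continuous_map_def topspace_RP2_top
  by (auto simp: openin_RP2_top RP2_def)

lemma connected_space_RP2_top: "connected_space RP2_top"
proof -
  have "connectedin (top_of_set S2) S2"
    by (simp add: connectedin_subtopology S2_def connected_sphere)
  then have "connectedin RP2_top (rp2_class ` S2)"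
    by (rule connectedin_continuous_map_image[OF continuous_map_rp2_class])
  then show ?thesis
    by (metis RP2_def connectedin_topspace topspace_RP2_top)
qed

lemma H2C_zero_RP2: "H2C_zero RP2_top RP2 rp2_op TYPE(bit)"
  by (rule connected_space_imp_H2C_zero[OF connected_space_RP2_top topspace_RP2_top])

lemma s2_op_scaleR_left: "s2_op (t *\<^sub>R a) b = t *\<^sub>R s2_op a b"
  by (simp add: s2_op_def algebra_simps)

lemma s2_op_scaleR_right: "t * t = 1 \<Longrightarrow> s2_op a (t *\<^sub>R b) = s2_op a b"
  by (simp add: s2_op_def algebra_simps)

lemma s2_op_neg_left: "s2_op (- a) b = - s2_op a b"
  by (simp add: s2_op_def)

lemma s2_op_neg_right: "s2_op a (- b) = s2_op a b"
  by (simp add: s2_op_def)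

lemma s2_op_orthogonal: "a \<bullet> b = 0 \<Longrightarrow> s2_op a b = - a"
  by (simp add: s2_op_def)

lemma inner_s2_op_s2_op: "c \<bullet> c = 1 \<Longrightarrow> s2_op a c \<bullet> s2_op b c = a \<bullet> b"
  by (simp add: s2_op_def inner_diff_right inner_commute algebra_simps)

lemma s2_op_in_S2: "a \<in> S2 \<Longrightarrow> b \<in> S2 \<Longrightarrow> s2_op a b \<in> S2"
  using inner_s2_op_s2_op[of b a a] by (simp add: S2_def norm_eq_1)

lemma s2_op_idem: "a \<bullet> a = 1 \<Longrightarrow> s2_op a a = a"
  by (simp add: s2_op_def scaleR_2)

lemma s2_op_self_distrib:
  assumes "c \<bullet> c = 1"
  shows "s2_op (s2_op a b) c = s2_op (s2_op a c) (s2_op b c)"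
proof -
  have linear_left: "s2_op (t *\<^sub>R u - v) c = t *\<^sub>R s2_op u c - s2_op v c" for t u v
    by (simp add: s2_op_def algebra_simps inner_diff_left)
  have "s2_op (s2_op a c) (s2_op b c) = (2 * (a \<bullet> b)) *\<^sub>R s2_op b c - s2_op a c"
    unfolding s2_op_def[of "s2_op a c"] inner_s2_op_s2_op[OF assms] ..
  also have "\<dots> = s2_op ((2 * (a \<bullet> b)) *\<^sub>R b - a) c"
    by (rule linear_left[symmetric])
  finally show ?thesis by (simp add: s2_op_def[of a b])
qed

definition rp2_rep :: "(real^3) set \<Rightarrow> real^3" where
  "rp2_rep A = (SOME x. x \<in> A)"

lemma rp2_op_eq: "rp2_op A B = rp2_class (s2_op (rp2_rep A) (rp2_rep B))"
  by (simp add: rp2_op_def rp2_rep_def)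

lemma rp2_class_neg: "rp2_class (- v) = rp2_class v"
  by (auto simp: rp2_class_def)

lemma rp2_rep_rp2_class: "rp2_rep (rp2_class v) = v \<or> rp2_rep (rp2_class v) = - v"
proof -
  have "rp2_rep (rp2_class v) \<in> {v, -v}"
    unfolding rp2_rep_def rp2_class_def by (rule someI[of _ v]) simp
  then show ?thesis by blast
qed

lemma rp2_class_rp2_rep:
  assumes "A \<in> RP2"
  shows "rp2_class (rp2_rep A) = A"
proof -
  obtain v where "A = rp2_class v" using assms by (auto simp: RP2_def)
  then show ?thesis using rp2_rep_rp2_class[of v] by (auto simp only: rp2_class_neg)
qed

lemma rp2_rep_in_S2:
  assumes "A \<in> RP2"
  shows "rp2_rep A \<in> S2"
proof -
  obtain v where v: "v \<in> S2" and A: "A = rp2_class v" using assms by (auto simp: RP2_def)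
  have "rp2_rep A = v \<or> rp2_rep A = - v" using A rp2_rep_rp2_class by simp
  then show ?thesis using v by (auto simp: S2_def)
qed

lemma rp2_op_rp2_class: "rp2_op (rp2_class a) (rp2_class b) = rp2_class (s2_op a b)"
proof -
  have "rp2_op (rp2_class a) (rp2_class b)
    = rp2_class (s2_op (rp2_rep (rp2_class a)) (rp2_rep (rp2_class b)))"
    by (rule rp2_op_eq)
  also have "\<dots> = rp2_class (s2_op a b)"
    using rp2_rep_rp2_class[of a] rp2_rep_rp2_class[of b]
    by (elim disjE) (simp_all only: s2_op_neg_left s2_op_neg_right rp2_class_neg)
  finally show ?thesis .
qed

definition bit_sign :: "bit \<Rightarrow> real" where
  "bit_sign b = (if b = 0 then 1 else -1)"

lemma bit_cases: obtains "b = (0::bit)" | "b = 1"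
  using bit_not_zero_iff by blast

lemma bit_sign_add: "bit_sign (p + q) = bit_sign p * bit_sign q"
  by (cases p rule: bit_cases; cases q rule: bit_cases) (simp_all add: bit_sign_def)

lemma bit_sign_eq_iff: "bit_sign p = bit_sign q \<longleftrightarrow> p = q"
  by (cases p rule: bit_cases; cases q rule: bit_cases) (simp_all add: bit_sign_def)

lemma bit_sign_square: "bit_sign b * bit_sign b = 1"
  by (simp add: bit_sign_def)

definition rp2_lift_cocycle :: "(real^3) set \<Rightarrow> (real^3) set \<Rightarrow> bit" where
  "rp2_lift_cocycle A B = (if s2_op (rp2_rep A) (rp2_rep B) = rp2_rep (rp2_op A B) then 0 else 1)"

lemma s2_op_rp2_rep:
  "s2_op (rp2_rep A) (rp2_rep B) = bit_sign (rp2_lift_cocycle A B) *\<^sub>R rp2_rep (rp2_op A B)"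
  using rp2_rep_rp2_class[of "s2_op (rp2_rep A) (rp2_rep B)"]
  by (auto simp: rp2_lift_cocycle_def bit_sign_def rp2_op_eq)

lemma rp2_lift_cocycle_cocycle: "quandle_2cocycle RP2 rp2_op rp2_lift_cocycle"
  unfolding quandle_2cocycle_def
proof (intro conjI ballI)
  fix A assume A: "A \<in> RP2"
  have "rp2_rep A \<bullet> rp2_rep A = 1"
    using rp2_rep_in_S2[OF A] by (simp add: S2_def norm_eq_1)
  then have idem: "s2_op (rp2_rep A) (rp2_rep A) = rp2_rep A" by (rule s2_op_idem)
  then have "rp2_op A A = A" by (simp add: rp2_op_eq rp2_class_rp2_rep[OF A])
  then show "rp2_lift_cocycle A A = 0" by (simp add: rp2_lift_cocycle_def idem)
next
  fix A B C assume A: "A \<in> RP2" and B: "B \<in> RP2" and C: "C \<in> RP2"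
  let ?\<phi> = rp2_lift_cocycle and ?r = rp2_rep and ?Z = "rp2_op (rp2_op A B) C"
  have c: "?r C \<bullet> ?r C = 1"
    using rp2_rep_in_S2[OF C] by (simp add: S2_def norm_eq_1)
  define P where "P = s2_op (s2_op (?r A) (?r B)) (?r C)"
  have distrib: "P = s2_op (s2_op (?r A) (?r C)) (s2_op (?r B) (?r C))"
    unfolding P_def by (rule s2_op_self_distrib[OF c])
  have Z: "?Z = rp2_class P"
    by (simp add: rp2_op_eq[of A B] rp2_op_rp2_class[symmetric] rp2_class_rp2_rep[OF C] P_def)
  have Z': "rp2_op (rp2_op A C) (rp2_op B C) = ?Z"
    by (simp add: Z distrib rp2_op_eq[of A C] rp2_op_eq[of B C] rp2_op_rp2_class)
  have left: "P = bit_sign (?\<phi> A B + ?\<phi> (rp2_op A B) C) *\<^sub>R ?r ?Z"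
    unfolding P_def s2_op_rp2_rep[of A B] s2_op_scaleR_left s2_op_rp2_rep[of "rp2_op A B" C]
      bit_sign_add by (simp only: scaleR_scaleR)
  have right: "P = bit_sign (?\<phi> A C + ?\<phi> (rp2_op A C) (rp2_op B C)) *\<^sub>R ?r ?Z"
    unfolding distrib s2_op_rp2_rep[of A C] s2_op_rp2_rep[of B C] s2_op_scaleR_left
      s2_op_scaleR_right[OF bit_sign_square] s2_op_rp2_rep[of "rp2_op A C"] Z' bit_sign_add
    by (simp only: scaleR_scaleR)
  have "P \<in> S2"
    using rp2_rep_in_S2 A B C s2_op_in_S2 by (simp add: P_def)
  then have "?r ?Z \<in> S2"
    by (simp add: Z RP2_def rp2_rep_in_S2)
  then have "?r ?Z \<noteq> 0" by (auto simp: S2_def)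
  with left right show "?\<phi> A B + ?\<phi> (rp2_op A B) C = ?\<phi> A C + ?\<phi> (rp2_op A C) (rp2_op B C)"
    by (simp add: bit_sign_eq_iff)
qed

lemma rp2_lift_cocycle_not_coboundary: "\<not> quandle_2coboundary_of RP2 rp2_op f rp2_lift_cocycle"
proof
  assume coboundary: "quandle_2coboundary_of RP2 rp2_op f rp2_lift_cocycle"
  define e1 e2 :: "real^3" where "e1 = axis 1 1" and "e2 = axis 2 1"
  define X Y where "X = rp2_class e1" and "Y = rp2_class e2"
  have "X \<in> RP2" "Y \<in> RP2"
    by (auto simp: RP2_def S2_def X_def Y_def e1_def e2_def)
  have orth: "e1 \<bullet> e2 = 0" by (simp add: e1_def e2_def inner_axis_axis)
  have fixed: "rp2_op X Y = X"
    by (simp add: X_def Y_def rp2_op_rp2_class s2_op_orthogonal[OF orth] rp2_class_neg)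
  have "rp2_lift_cocycle X Y = 0"
    by (rule quandle_2coboundary_of_fixed[OF coboundary \<open>X \<in> RP2\<close> \<open>Y \<in> RP2\<close> fixed])
  then have "s2_op (rp2_rep X) (rp2_rep Y) = rp2_rep X"
    by (simp add: rp2_lift_cocycle_def fixed split: if_splits)
  moreover have "rp2_rep X \<bullet> rp2_rep Y = 0"
    using rp2_rep_rp2_class[of e1] rp2_rep_rp2_class[of e2] orth by (auto simp: X_def Y_def)
  ultimately have "(2::real) *\<^sub>R rp2_rep X = 0"
    by (metis s2_op_orthogonal scaleR_2 neg_eq_iff_add_eq_0)
  then have "rp2_rep X = 0" by simp
  then show False
    using rp2_rep_in_S2[OF \<open>X \<in> RP2\<close>] by (simp add: S2_def)
qed

lemma H2Q_nonzero_RP2: "H2Q_nonzero RP2 rp2_op TYPE(bit)"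
  unfolding H2Q_nonzero_def
  using rp2_lift_cocycle_cocycle rp2_lift_cocycle_not_coboundary by blast

theorem mainTheorem9:
  shows "H2Q_nonzero RP2 rp2_op TYPE(bit) \<and> H2C_zero RP2_top RP2 rp2_op TYPE(bit)"
  using H2Q_nonzero_RP2 H2C_zero_RP2 by blast

end
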